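(* Let $1\le s<t\le k$ and $u,v\ge 2$ be integers. If there exist an AOA$(s,t,k,v)$ and an AOA$(s,t,k,u)$, then there exists an AOA$(s,t,k,uv)$.
   Context: An orthogonal array OA$(t,k,v)$ (with $1\le t\le k$) is a $v^t\times k$ array with entries from a set $X$ of size $v$ such that, for every choice of $t$ of its columns, each $t$-tuple in $X^t$ appears exactly once as a row of the corresponding $v^t\times t$ subarray. For integers $1\le s\le t\le k$, an augmented orthogonal array AOA$(s,t,k,v)$ is a $v^t\times(k+1)$ array $A$ such that: (1) the first $k$ columns of $A$ form an OA$(t,k,v)$ on a symbol set $X$ of size $v$; (2) the last column of $A$ has entries from a set $Y$ of size $v^{t-s}$; (3) for any choice of $s$ of the first $k$ columns, these $s$ columns together with the last column contain every $(s+1)$-tuple of $X^s\times Y$ exactly once as a row. *)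

theory Defs
  imports Main
begin

text \<open>An array with N rows and columns indexed by naturals is a function
  A :: nat => nat => 'a, where A r c is the entry in row r < N, column c.\<close>

definition is_OA :: "nat \<Rightarrow> nat \<Rightarrow> nat \<Rightarrow> 'a set \<Rightarrow> (nat \<Rightarrow> nat \<Rightarrow> 'a) \<Rightarrow> bool" where
  "is_OA t k v X A \<longleftrightarrow>
     1 \<le> t \<and> t \<le> k \<and> finite X \<and> card X = v \<and>
     (\<forall>r < v ^ t. \<forall>c < k. A r c \<in> X) \<and>
     (\<forall>C. C \<subseteq> {0..<k} \<and> card C = t \<longrightarrow>
        (\<forall>f. (\<forall>c\<in>C. f c \<in> X) \<longrightarrow>
           (\<exists>!r. r < v ^ t \<and> (\<forall>c\<in>C. A r c = f c))))"

definition is_AOA :: "nat \<Rightarrow> nat \<Rightarrow> nat \<Rightarrow> nat \<Rightarrow> 'a set \<Rightarrow> 'a set \<Rightarrow> (nat \<Rightarrow> nat \<Rightarrow> 'a) \<Rightarrow> bool" where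
  "is_AOA s t k v X Y A \<longleftrightarrow>
     1 \<le> s \<and> s \<le> t \<and> is_OA t k v X A \<and>
     finite Y \<and> card Y = v ^ (t - s) \<and>
     (\<forall>r < v ^ t. A r k \<in> Y) \<and>
     (\<forall>C. C \<subseteq> {0..<k} \<and> card C = s \<longrightarrow>
        (\<forall>f y. (\<forall>c\<in>C. f c \<in> X) \<and> y \<in> Y \<longrightarrow>
           (\<exists>!r. r < v ^ t \<and> (\<forall>c\<in>C. A r c = f c) \<and> A r k = y)))"

end

theory Submission
  imports Defs "HOL-Library.Nat_Bijection"
begin

text \<open>Index the rows of the product by pairs of rows, row \<open>r\<close> corresponding to row
  \<open>r mod N\<^sub>1\<close> of the first and row \<open>r div N\<^sub>1\<close> of the second array, and read the entries
  componentwise. A choice of values in the product on a set of columns is a pair of choices,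
  each realised by exactly one row of its factor, so it is realised by exactly one pair of
  rows. Both the OA and the AOA conditions are of this form, and the symbol counts multiply:
  \<open>(uv)\<^sup>t\<close> rows, \<open>uv\<close> symbols and \<open>(uv)\<^sup>t\<^sup>-\<^sup>s\<close> symbols in the last column.\<close>

lemma mod_div_less_of_less_mult:
  fixes r a b :: nat
  assumes "r < a * b"
  shows "r mod a < a" and "r div a < b"
proof -
  from assms have "a > 0" by (cases "a = 0") auto
  then show "r mod a < a" by simp
  from assms show "r div a < b" by (simp add: less_mult_imp_div_less mult.commute)
qed

lemma ex1_less_mult_mod_div:
  fixes N\<^sub>1 N\<^sub>2 :: nat
  assumes "\<exists>!r\<^sub>1. r\<^sub>1 < N\<^sub>1 \<and> P\<^sub>1 r\<^sub>1" and "\<exists>!r\<^sub>2. r\<^sub>2 < N\<^sub>2 \<and> P\<^sub>2 r\<^sub>2"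
  shows "\<exists>!r. r < N\<^sub>1 * N\<^sub>2 \<and> P\<^sub>1 (r mod N\<^sub>1) \<and> P\<^sub>2 (r div N\<^sub>1)"
proof -
  obtain r\<^sub>1 where r\<^sub>1: "r\<^sub>1 < N\<^sub>1" "P\<^sub>1 r\<^sub>1" and uniq\<^sub>1: "\<And>x. x < N\<^sub>1 \<Longrightarrow> P\<^sub>1 x \<Longrightarrow> x = r\<^sub>1"
    using assms(1) by blast
  obtain r\<^sub>2 where r\<^sub>2: "r\<^sub>2 < N\<^sub>2" "P\<^sub>2 r\<^sub>2" and uniq\<^sub>2: "\<And>x. x < N\<^sub>2 \<Longrightarrow> P\<^sub>2 x \<Longrightarrow> x = r\<^sub>2"
    using assms(2) by blast
  show ?thesis
  proof (rule ex1I[of _ "r\<^sub>2 * N\<^sub>1 + r\<^sub>1"])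
    have "r\<^sub>2 * N\<^sub>1 + r\<^sub>1 < (r\<^sub>2 + 1) * N\<^sub>1" using r\<^sub>1(1) by simp
    also have "\<dots> \<le> N\<^sub>2 * N\<^sub>1" using r\<^sub>2(1) by (intro mult_right_mono) auto
    finally show "r\<^sub>2 * N\<^sub>1 + r\<^sub>1 < N\<^sub>1 * N\<^sub>2 \<and> P\<^sub>1 ((r\<^sub>2 * N\<^sub>1 + r\<^sub>1) mod N\<^sub>1) \<and> P\<^sub>2 ((r\<^sub>2 * N\<^sub>1 + r\<^sub>1) div N\<^sub>1)"
      using r\<^sub>1 r\<^sub>2 by (simp add: mult.commute)
  next
    fix r assume r: "r < N\<^sub>1 * N\<^sub>2 \<and> P\<^sub>1 (r mod N\<^sub>1) \<and> P\<^sub>2 (r div N\<^sub>1)"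
    then have "r mod N\<^sub>1 = r\<^sub>1" and "r div N\<^sub>1 = r\<^sub>2"
      using uniq\<^sub>1 uniq\<^sub>2 mod_div_less_of_less_mult by blast+
    then show "r = r\<^sub>2 * N\<^sub>1 + r\<^sub>1" by (metis div_mult_mod_eq)
  qed
qed

definition unique_rows :: "nat \<Rightarrow> (nat \<Rightarrow> nat \<Rightarrow> 'a) \<Rightarrow> nat set \<Rightarrow> (nat \<Rightarrow> 'a set) \<Rightarrow> bool" where
  "unique_rows N A D Z \<longleftrightarrow>
     (\<forall>g. (\<forall>c\<in>D. g c \<in> Z c) \<longrightarrow> (\<exists>!r. r < N \<and> (\<forall>c\<in>D. A r c = g c)))"

definition array_product ::
    "nat \<Rightarrow> (nat \<Rightarrow> nat \<Rightarrow> 'a) \<Rightarrow> (nat \<Rightarrow> nat \<Rightarrow> 'b) \<Rightarrow> nat \<Rightarrow> nat \<Rightarrow> 'a \<times> 'b" where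
  "array_product N A B r c = (A (r mod N) c, B (r div N) c)"

lemma unique_rows_array_product:
  assumes "unique_rows N\<^sub>1 A D Z\<^sub>1" and "unique_rows N\<^sub>2 B D Z\<^sub>2"
  shows "unique_rows (N\<^sub>1 * N\<^sub>2) (array_product N\<^sub>1 A B) D (\<lambda>c. Z\<^sub>1 c \<times> Z\<^sub>2 c)"
  unfolding unique_rows_def
proof (intro allI impI)
  fix g assume "\<forall>c\<in>D. g c \<in> Z\<^sub>1 c \<times> Z\<^sub>2 c"
  then have "\<exists>!r\<^sub>1. r\<^sub>1 < N\<^sub>1 \<and> (\<forall>c\<in>D. A r\<^sub>1 c = fst (g c))"
    and "\<exists>!r\<^sub>2. r\<^sub>2 < N\<^sub>2 \<and> (\<forall>c\<in>D. B r\<^sub>2 c = snd (g c))"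
    using assms unfolding unique_rows_def by (auto simp: mem_Times_iff)
  from ex1_less_mult_mod_div[OF this]
  show "\<exists>!r. r < N\<^sub>1 * N\<^sub>2 \<and> (\<forall>c\<in>D. array_product N\<^sub>1 A B r c = g c)"
    unfolding array_product_def prod_eq_iff by auto
qed

lemma array_product_mem:
  assumes "r < N\<^sub>1 * N\<^sub>2" and "\<forall>r<N\<^sub>1. A r c \<in> Z\<^sub>1" and "\<forall>r<N\<^sub>2. B r c \<in> Z\<^sub>2"
  shows "array_product N\<^sub>1 A B r c \<in> Z\<^sub>1 \<times> Z\<^sub>2"
  using assms mod_div_less_of_less_mult[OF assms(1)] by (simp add: array_product_def)

lemma unique_rows_relabel:
  assumes "inj h" and "unique_rows N A D Z"
  shows "unique_rows N (\<lambda>r c. h (A r c)) D (\<lambda>c. h ` Z c)"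
  unfolding unique_rows_def
proof (intro allI impI)
  fix g assume "\<forall>c\<in>D. g c \<in> h ` Z c"
  then have "\<forall>c\<in>D. inv h (g c) \<in> Z c" and g: "\<forall>c\<in>D. h (inv h (g c)) = g c"
    using assms(1) by auto
  then have "\<exists>!r. r < N \<and> (\<forall>c\<in>D. A r c = inv h (g c))"
    using assms(2) unfolding unique_rows_def by simp
  moreover have "A r c = inv h (g c) \<longleftrightarrow> h (A r c) = g c" if "c \<in> D" for r c
    using g that assms(1) by (metis inv_f_f)
  ultimately show "\<exists>!r. r < N \<and> (\<forall>c\<in>D. h (A r c) = g c)"
    by (metis (no_types, lifting))
qed

text \<open>The last column \<open>k\<close> of an AOA is just one more column of the uniqueness condition,
  carrying its own symbol set \<open>Y\<close>.\<close>

lemma unique_rows_insert_iff: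
  assumes "k \<notin> C"
  shows "unique_rows N A (insert k C) (Z(k := Y)) \<longleftrightarrow>
    (\<forall>f y. (\<forall>c\<in>C. f c \<in> Z c) \<and> y \<in> Y \<longrightarrow> (\<exists>!r. r < N \<and> (\<forall>c\<in>C. A r c = f c) \<and> A r k = y))"
proof -
  have row_iff: "(\<forall>c\<in>insert k C. A r c = g c) \<longleftrightarrow> (\<forall>c\<in>C. A r c = g c) \<and> A r k = g k"
    for r and g :: "nat \<Rightarrow> 'a" by auto
  have mem_iff: "(\<forall>c\<in>insert k C. g c \<in> (Z(k := Y)) c) \<longleftrightarrow> (\<forall>c\<in>C. g c \<in> Z c) \<and> g k \<in> Y"
    for g :: "nat \<Rightarrow> 'a" using assms by (auto split: if_splits)
  have row_upd: "(\<forall>c\<in>insert k C. A r c = (f(k := y)) c) \<longleftrightarrow> (\<forall>c\<in>C. A r c = f c) \<and> A r k = y"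
    for r f and y :: 'a using assms by auto
  have mem_upd: "(\<forall>c\<in>insert k C. (f(k := y)) c \<in> (Z(k := Y)) c) \<longleftrightarrow> (\<forall>c\<in>C. f c \<in> Z c) \<and> y \<in> Y"
    for f and y :: 'a using assms by auto
  show ?thesis
  proof
    assume uniq: "unique_rows N A (insert k C) (Z(k := Y))"
    show "\<forall>f y. (\<forall>c\<in>C. f c \<in> Z c) \<and> y \<in> Y \<longrightarrow>
        (\<exists>!r. r < N \<and> (\<forall>c\<in>C. A r c = f c) \<and> A r k = y)"
    proof (intro allI impI)
      fix f y assume "(\<forall>c\<in>C. f c \<in> Z c) \<and> y \<in> Y"
      then have "\<forall>c\<in>insert k C. (f(k := y)) c \<in> (Z(k := Y)) c"
        unfolding mem_upd .
      from mp[OF spec[OF uniq[unfolded unique_rows_def], of "f(k := y)"] this]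
      show "\<exists>!r. r < N \<and> (\<forall>c\<in>C. A r c = f c) \<and> A r k = y"
        unfolding row_upd .
    qed
  next
    assume uniq: "\<forall>f y. (\<forall>c\<in>C. f c \<in> Z c) \<and> y \<in> Y \<longrightarrow>
        (\<exists>!r. r < N \<and> (\<forall>c\<in>C. A r c = f c) \<and> A r k = y)"
    show "unique_rows N A (insert k C) (Z(k := Y))"
      unfolding unique_rows_def row_iff mem_iff using uniq by blast
  qed
qed

lemma is_OA_iff_unique_rows:
  "is_OA t k v X A \<longleftrightarrow>
     1 \<le> t \<and> t \<le> k \<and> finite X \<and> card X = v \<and> (\<forall>r < v ^ t. \<forall>c < k. A r c \<in> X) \<and>
     (\<forall>C. C \<subseteq> {0..<k} \<and> card C = t \<longrightarrow> unique_rows (v ^ t) A C (\<lambda>_. X))"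
  unfolding is_OA_def unique_rows_def by simp

lemma is_AOA_iff_unique_rows:
  "is_AOA s t k v X Y A \<longleftrightarrow>
     1 \<le> s \<and> s \<le> t \<and> is_OA t k v X A \<and> finite Y \<and> card Y = v ^ (t - s) \<and>
     (\<forall>r < v ^ t. A r k \<in> Y) \<and>
     (\<forall>C. C \<subseteq> {0..<k} \<and> card C = s \<longrightarrow>
        unique_rows (v ^ t) A (insert k C) ((\<lambda>_. X)(k := Y)))"
proof -
  have "k \<notin> C" if "C \<subseteq> {0..<k}" for C using that by auto
  then show ?thesis unfolding is_AOA_def by (auto simp: unique_rows_insert_iff)
qed

lemma is_OA_array_product:
  assumes A: "is_OA t k v\<^sub>1 X\<^sub>1 A" and B: "is_OA t k v\<^sub>2 X\<^sub>2 B"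
  shows "is_OA t k (v\<^sub>1 * v\<^sub>2) (X\<^sub>1 \<times> X\<^sub>2) (array_product (v\<^sub>1 ^ t) A B)"
  unfolding is_OA_iff_unique_rows power_mult_distrib
proof (intro conjI allI impI)
  show "1 \<le> t" "t \<le> k" "finite (X\<^sub>1 \<times> X\<^sub>2)" "card (X\<^sub>1 \<times> X\<^sub>2) = v\<^sub>1 * v\<^sub>2"
    using A B by (simp_all add: is_OA_iff_unique_rows card_cartesian_product)
next
  fix r c assume "r < v\<^sub>1 ^ t * v\<^sub>2 ^ t" "c < k"
  then show "array_product (v\<^sub>1 ^ t) A B r c \<in> X\<^sub>1 \<times> X\<^sub>2"
    using A B by (intro array_product_mem) (auto simp: is_OA_iff_unique_rows)
next
  fix C :: "nat set" assume "C \<subseteq> {0..<k} \<and> card C = t"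
  then have "unique_rows (v\<^sub>1 ^ t) A C (\<lambda>_. X\<^sub>1)" and "unique_rows (v\<^sub>2 ^ t) B C (\<lambda>_. X\<^sub>2)"
    using A B unfolding is_OA_iff_unique_rows by blast+
  then show "unique_rows (v\<^sub>1 ^ t * v\<^sub>2 ^ t) (array_product (v\<^sub>1 ^ t) A B) C (\<lambda>_. X\<^sub>1 \<times> X\<^sub>2)"
    by (rule unique_rows_array_product)
qed

lemma is_AOA_array_product:
  assumes A: "is_AOA s t k v\<^sub>1 X\<^sub>1 Y\<^sub>1 A" and B: "is_AOA s t k v\<^sub>2 X\<^sub>2 Y\<^sub>2 B"
  shows "is_AOA s t k (v\<^sub>1 * v\<^sub>2) (X\<^sub>1 \<times> X\<^sub>2) (Y\<^sub>1 \<times> Y\<^sub>2) (array_product (v\<^sub>1 ^ t) A B)"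
  unfolding is_AOA_iff_unique_rows power_mult_distrib
proof (intro conjI allI impI)
  show "1 \<le> s" "s \<le> t" "finite (Y\<^sub>1 \<times> Y\<^sub>2)"
    "card (Y\<^sub>1 \<times> Y\<^sub>2) = v\<^sub>1 ^ (t - s) * v\<^sub>2 ^ (t - s)"
    using A B by (simp_all add: is_AOA_iff_unique_rows card_cartesian_product)
  show "is_OA t k (v\<^sub>1 * v\<^sub>2) (X\<^sub>1 \<times> X\<^sub>2) (array_product (v\<^sub>1 ^ t) A B)"
    using A B by (intro is_OA_array_product) (simp_all add: is_AOA_iff_unique_rows)
next
  fix r assume "r < v\<^sub>1 ^ t * v\<^sub>2 ^ t"
  then show "array_product (v\<^sub>1 ^ t) A B r k \<in> Y\<^sub>1 \<times> Y\<^sub>2"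
    using A B by (intro array_product_mem) (auto simp: is_AOA_iff_unique_rows)
next
  fix C :: "nat set" assume "C \<subseteq> {0..<k} \<and> card C = s"
  then have "unique_rows (v\<^sub>1 ^ t) A (insert k C) ((\<lambda>_. X\<^sub>1)(k := Y\<^sub>1))"
    and "unique_rows (v\<^sub>2 ^ t) B (insert k C) ((\<lambda>_. X\<^sub>2)(k := Y\<^sub>2))"
    using A B unfolding is_AOA_iff_unique_rows by blast+
  then have "unique_rows (v\<^sub>1 ^ t * v\<^sub>2 ^ t) (array_product (v\<^sub>1 ^ t) A B) (insert k C)
      (\<lambda>c. ((\<lambda>_. X\<^sub>1)(k := Y\<^sub>1)) c \<times> ((\<lambda>_. X\<^sub>2)(k := Y\<^sub>2)) c)"
    by (rule unique_rows_array_product)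
  moreover have "(\<lambda>c. ((\<lambda>_. X\<^sub>1)(k := Y\<^sub>1)) c \<times> ((\<lambda>_. X\<^sub>2)(k := Y\<^sub>2)) c) =
      (\<lambda>_. X\<^sub>1 \<times> X\<^sub>2)(k := Y\<^sub>1 \<times> Y\<^sub>2)"
    by (simp add: fun_eq_iff)
  ultimately show "unique_rows (v\<^sub>1 ^ t * v\<^sub>2 ^ t) (array_product (v\<^sub>1 ^ t) A B) (insert k C)
      ((\<lambda>_. X\<^sub>1 \<times> X\<^sub>2)(k := Y\<^sub>1 \<times> Y\<^sub>2))"
    by simp
qed

lemma is_AOA_relabel:
  assumes "inj h" and AOA: "is_AOA s t k v X Y A"
  shows "is_AOA s t k v (h ` X) (h ` Y) (\<lambda>r c. h (A r c))"
  unfolding is_AOA_iff_unique_rows is_OA_iff_unique_rows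
proof (intro conjI allI impI)
  have inj_on: "inj_on h S" for S using assms(1) by (rule inj_on_subset) simp
  show "1 \<le> s" "s \<le> t" "1 \<le> t" "t \<le> k" "finite (h ` X)" "card (h ` X) = v"
    "finite (h ` Y)" "card (h ` Y) = v ^ (t - s)"
    using AOA by (simp_all add: is_AOA_iff_unique_rows is_OA_iff_unique_rows card_image[OF inj_on])
  show "\<And>r c. r < v ^ t \<Longrightarrow> c < k \<Longrightarrow> h (A r c) \<in> h ` X"
    "\<And>r. r < v ^ t \<Longrightarrow> h (A r k) \<in> h ` Y"
    using AOA by (simp_all add: is_AOA_iff_unique_rows is_OA_iff_unique_rows)
next
  fix C :: "nat set" assume "C \<subseteq> {0..<k} \<and> card C = t"
  then have "unique_rows (v ^ t) A C (\<lambda>_. X)"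
    using AOA unfolding is_AOA_iff_unique_rows is_OA_iff_unique_rows by blast
  then show "unique_rows (v ^ t) (\<lambda>r c. h (A r c)) C (\<lambda>_. h ` X)"
    by (rule unique_rows_relabel[OF assms(1)])
next
  fix C :: "nat set" assume "C \<subseteq> {0..<k} \<and> card C = s"
  then have "unique_rows (v ^ t) A (insert k C) ((\<lambda>_. X)(k := Y))"
    using AOA unfolding is_AOA_iff_unique_rows by blast
  moreover have "(\<lambda>c. h ` ((\<lambda>_. X)(k := Y)) c) = (\<lambda>_. h ` X)(k := h ` Y)"
    by (simp add: fun_eq_iff)
  ultimately show "unique_rows (v ^ t) (\<lambda>r c. h (A r c)) (insert k C) ((\<lambda>_. h ` X)(k := h ` Y))"
    using unique_rows_relabel[OF assms(1)] by metis
qed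

theorem theorem2p1:
  fixes s t k u v :: nat
  assumes "1 \<le> s" and "s < t" and "t \<le> k" and "u \<ge> 2" and "v \<ge> 2"
    and "\<exists>(A :: nat \<Rightarrow> nat \<Rightarrow> nat) X Y. is_AOA s t k v X Y A"
    and "\<exists>(A :: nat \<Rightarrow> nat \<Rightarrow> nat) X Y. is_AOA s t k u X Y A"
  shows "\<exists>(A :: nat \<Rightarrow> nat \<Rightarrow> nat) X Y. is_AOA s t k (u * v) X Y A"
proof -
  obtain A :: "nat \<Rightarrow> nat \<Rightarrow> nat" and X Y where "is_AOA s t k v X Y A"
    using assms(6) by blast
  moreover obtain B :: "nat \<Rightarrow> nat \<Rightarrow> nat" and X' Y' where "is_AOA s t k u X' Y' B"
    using assms(7) by blast
  ultimately have "is_AOA s t k (v * u) (X \<times> X') (Y \<times> Y') (array_product (v ^ t) A B)"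
    by (rule is_AOA_array_product)
  then have "is_AOA s t k (u * v) (prod_encode ` (X \<times> X')) (prod_encode ` (Y \<times> Y'))
      (\<lambda>r c. prod_encode (array_product (v ^ t) A B r c))"
    by (simp add: is_AOA_relabel inj_prod_encode mult.commute)
  then show ?thesis by blast
qed

end
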